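(* Let $\rho:\gamma_0\to\gamma_1\to\cdots\to\gamma_r$ be a lossy execution of a broadcast protocol $P=(Q,I,M,\Delta)$ with $\gamma_r=(V,E,L)$. For every $q\in L(\gamma_r)$ and every node $v^q\in V$ with $L(v^q)=q$, there exist $s\in\mathbb{N}$ and a lossy execution $\rho':\gamma'_0\to\gamma'_1\to\cdots\to\gamma'_s$ with $\gamma'_s=(V',E',L')$ such that $|V'|=|V|+1$, and there is an injection $\iota:V\to V'$ with $L'(\iota(v))=L(v)$ for every $v\in V$, and, for the extra node $v_{new}\in V'\setminus\iota(V)$: $L'(v_{new})=q$; for every $v\in V$, $v_{new}$ and $\iota(v)$ are adjacent in $E'$ if and only if $v^q$ and $v$ are adjacent in $E$; the number of broadcasts (lost or successful) performed by $v_{new}$ along $\rho'$ equals the number of broadcasts performed by $v^q$ along $\rho$; and $v_{new}$ performs no successful broadcast along $\rho'$.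
   Context: A broadcast protocol is a tuple $P=(Q,I,M,\Delta)$ where $Q$ is a finite set of states, $I\subseteq Q$ initial states, $M$ a finite message alphabet and $\Delta\subseteq Q\times\{!!m,\ ??m \mid m\in M\}\times Q$ ($!!m$ = broadcast, $??m$ = reception). Protocols are complete for receptions: for every $q$, $m$ there is $q'$ with $(q,??m,q')\in\Delta$. A configuration is a finite undirected graph $\gamma=(V,E,L)$, $E$ symmetric irreflexive, $L:V\to Q$; $L(\gamma)=L(V)$; $\gamma$ is initial if $L(V)\subseteq I$. A lossy step goes from $\gamma=(V,E,L)$ to $\gamma'=(V,E,L')$ (same nodes and edges) if there exist a node $v$ (which broadcasts in this step) and $m\in M$ with $(L(v),!!m,L'(v))\in\Delta$ and either (a) $L'(v')=L(v')$ for all $v'\neq v$ (the broadcast is lost), or (b) for every $v'\neq v$: if $v'$ is a neighbour of $v$ then $(L(v'),??m,L'(v'))\in\Delta$, otherwise $L'(v')=L(v')$ (the broadcast is successful). A lossy execution is a sequence $\gamma_0,\dots,\gamma_r$ of configurations with $\gamma_0$ initial and consecutive lossy steps (so node set and edges are fixed). *)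

theory Defs
  imports Main
begin

datatype 'm action = Bcast 'm | Recv 'm

definition broadcast_protocol ::
  "'q set \<Rightarrow> 'q set \<Rightarrow> 'm set \<Rightarrow> ('q \<times> 'm action \<times> 'q) set \<Rightarrow> bool" where
  "broadcast_protocol Q I M Delta \<longleftrightarrow>
     finite Q \<and> finite M \<and> I \<subseteq> Q \<and>
     (\<forall>(q, a, q') \<in> Delta. q \<in> Q \<and> q' \<in> Q \<and>
        (\<exists>m \<in> M. a = Bcast m \<or> a = Recv m)) \<and>
     (\<forall>q \<in> Q. \<forall>m \<in> M. \<exists>q'. (q, Recv m, q') \<in> Delta)"

text \<open>A configuration: a finite set of nodes V, a symmetric irreflexive edge
  relation E on V, and a labelling L (only its values on V matter).\<close>
type_synonym ('v, 'q) config = "'v set \<times> ('v \<times> 'v) set \<times> ('v \<Rightarrow> 'q)"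

definition is_config :: "'q set \<Rightarrow> ('v, 'q) config \<Rightarrow> bool" where
  "is_config Q \<gamma> \<longleftrightarrow> (case \<gamma> of (V, E, L) \<Rightarrow>
     finite V \<and> E \<subseteq> V \<times> V \<and> sym E \<and> irrefl E \<and> L ` V \<subseteq> Q)"

definition initial_config :: "'q set \<Rightarrow> 'q set \<Rightarrow> ('v, 'q) config \<Rightarrow> bool" where
  "initial_config Q I \<gamma> \<longleftrightarrow> is_config Q \<gamma> \<and> (case \<gamma> of (V, E, L) \<Rightarrow> L ` V \<subseteq> I)"

text \<open>A step label (v, m, lost): node v broadcasts m; lost = True means the
  broadcast is lost, lost = False means it is successful.\<close>
type_synonym ('v, 'm) step_label = "'v \<times> 'm \<times> bool"

definition lossy_step ::
  "'m set \<Rightarrow> ('q \<times> 'm action \<times> 'q) set \<Rightarrow>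
   ('v, 'q) config \<Rightarrow> ('v, 'm) step_label \<Rightarrow> ('v, 'q) config \<Rightarrow> bool" where
  "lossy_step M Delta \<gamma> lab \<gamma>' \<longleftrightarrow>
     (case \<gamma> of (V, E, L) \<Rightarrow> case \<gamma>' of (V', E', L') \<Rightarrow> case lab of (v, m, lost) \<Rightarrow>
       V' = V \<and> E' = E \<and> v \<in> V \<and> m \<in> M \<and>
       (L v, Bcast m, L' v) \<in> Delta \<and>
       (if lost then (\<forall>u \<in> V - {v}. L' u = L u)
        else (\<forall>u \<in> V - {v}.
                (if (v, u) \<in> E then (L u, Recv m, L' u) \<in> Delta else L' u = L u))))"

definition lossy_execution ::
  "'q set \<Rightarrow> 'q set \<Rightarrow> 'm set \<Rightarrow> ('q \<times> 'm action \<times> 'q) set \<Rightarrow>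
   ('v, 'q) config list \<Rightarrow> ('v, 'm) step_label list \<Rightarrow> bool" where
  "lossy_execution Q I M Delta cs ls \<longleftrightarrow>
     length cs = length ls + 1 \<and> initial_config Q I (cs ! 0) \<and>
     (\<forall>i < length ls. lossy_step M Delta (cs ! i) (ls ! i) (cs ! Suc i))"

definition num_broadcasts :: "'v \<Rightarrow> ('v, 'm) step_label list \<Rightarrow> nat" where
  "num_broadcasts w ls = length (filter (\<lambda>(u, m, lost). u = w) ls)"

definition num_successful_broadcasts :: "'v \<Rightarrow> ('v, 'm) step_label list \<Rightarrow> nat" where
  "num_successful_broadcasts w ls = length (filter (\<lambda>(u, m, lost). u = w \<and> \<not> lost) ls)"

end

theory Submission
  imports Defs
begin

text \<open>The new node is a clone of \<open>v\<^sup>q\<close>: it starts in the initial state of \<open>v\<^sup>q\<close>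
  and is adjacent exactly to the neighbours of \<open>v\<^sup>q\<close> (not to \<open>v\<^sup>q\<close> itself).
  A broadcast of a node other than \<open>v\<^sup>q\<close> reaches the clone iff it reaches \<open>v\<^sup>q\<close>,
  and the clone can then make the same reception as \<open>v\<^sup>q\<close>. A broadcast of
  \<open>v\<^sup>q\<close> does not reach the clone; it is followed by a lost broadcast of the clone
  with the same transition. So the clone always shares the state of \<open>v\<^sup>q\<close>,
  broadcasts as often, and never successfully.\<close>

inductive lossy_steps :: "'m set \<Rightarrow> ('q \<times> 'm action \<times> 'q) set \<Rightarrow>
   ('v, 'q) config \<Rightarrow> ('v, 'm) step_label list \<Rightarrow> ('v, 'q) config \<Rightarrow> bool"
  for M Delta where
  Nil: "lossy_steps M Delta c [] c"
| Cons: "lossy_step M Delta c l c1 \<Longrightarrow> lossy_steps M Delta c1 ls c2 \<Longrightarrow>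
    lossy_steps M Delta c (l # ls) c2"

lemma lossy_steps_append:
  "lossy_steps M Delta c ls1 c1 \<Longrightarrow> lossy_steps M Delta c1 ls2 c2 \<Longrightarrow>
   lossy_steps M Delta c (ls1 @ ls2) c2"
  by (induction rule: lossy_steps.induct) (auto intro: lossy_steps.intros)

lemma lossy_steps_if_chain:
  assumes "length cs = length ls + 1"
    and "\<forall>i < length ls. lossy_step M Delta (cs ! i) (ls ! i) (cs ! Suc i)"
  shows "lossy_steps M Delta (cs ! 0) ls (last cs)"
  using assms
proof (induction ls arbitrary: cs)
  case Nil
  then obtain c where "cs = [c]" by (auto simp: length_Suc_conv)
  then show ?case by (simp add: lossy_steps.Nil)
next
  case (Cons l ls)
  then obtain c cs1 where cs: "cs = c # cs1" and len: "length cs1 = length ls + 1"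
    by (cases cs) auto
  have "\<forall>i < length ls. lossy_step M Delta (cs1 ! i) (ls ! i) (cs1 ! Suc i)"
    using Cons.prems(2) cs by auto
  with Cons.IH len have "lossy_steps M Delta (cs1 ! 0) ls (last cs1)" by blast
  moreover have "lossy_step M Delta c l (cs1 ! 0)"
    using Cons.prems(2)[rule_format, of 0] cs by simp
  ultimately show ?case using cs len by (auto intro: lossy_steps.Cons)
qed

lemma chain_if_lossy_steps:
  "lossy_steps M Delta c ls c' \<Longrightarrow>
   \<exists>cs. length cs = length ls + 1 \<and> cs ! 0 = c \<and> last cs = c' \<and>
     (\<forall>i < length ls. lossy_step M Delta (cs ! i) (ls ! i) (cs ! Suc i))"
proof (induction rule: lossy_steps.induct)
  case (Nil c)
  show ?case by (intro exI[of _ "[c]"]) auto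
next
  case (Cons c l c1 ls c2)
  then obtain cs where cs: "length cs = length ls + 1" "cs ! 0 = c1" "last cs = c2"
     "\<forall>i < length ls. lossy_step M Delta (cs ! i) (ls ! i) (cs ! Suc i)" by blast
  show ?case
  proof (intro exI[of _ "c # cs"] conjI allI impI)
    fix i assume "i < length (l # ls)"
    then show "lossy_step M Delta ((c # cs) ! i) ((l # ls) ! i) ((c # cs) ! Suc i)"
      using cs Cons.hyps(1) by (cases i) auto
  qed (use cs in auto)
qed

lemma lossy_execution_imp_lossy_steps:
  "lossy_execution Q I M Delta cs ls \<Longrightarrow> lossy_steps M Delta (cs ! 0) ls (last cs)"
  unfolding lossy_execution_def by (blast intro: lossy_steps_if_chain)

lemma lossy_steps_imp_lossy_execution:
  "initial_config Q I c \<Longrightarrow> lossy_steps M Delta c ls c' \<Longrightarrow>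
   \<exists>cs. lossy_execution Q I M Delta cs ls \<and> last cs = c'"
  unfolding lossy_execution_def by (metis chain_if_lossy_steps)

lemma lossy_step_keeps_graph:
  "lossy_step M Delta (V, E, L) l c' \<Longrightarrow> \<exists>L'. c' = (V, E, L')"
  by (cases c') (auto simp: lossy_step_def split: prod.splits)

lemma lossy_steps_keep_graph:
  "lossy_steps M Delta c ls c' \<Longrightarrow> fst c' = fst c \<and> fst (snd c') = fst (snd c)"
  by (induction rule: lossy_steps.induct) (auto simp: lossy_step_def split: prod.splits)

text \<open>The clone is \<open>None\<close>, the original nodes are \<open>Some v\<close>. The cloned configuration
  is the pullback of the configuration along the map sending the clone to \<open>w\<close>.\<close>

definition clone_origin :: "'v \<Rightarrow> 'v option \<Rightarrow> 'v" where
  "clone_origin w = case_option w id"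

definition clone_config :: "'v \<Rightarrow> ('v, 'q) config \<Rightarrow> ('v option, 'q) config" where
  "clone_config w c = (case c of (V, E, L) \<Rightarrow>
     (insert None (Some ` V), {(x, y). (clone_origin w x, clone_origin w y) \<in> E},
      L \<circ> clone_origin w))"

fun clone_label :: "'v \<Rightarrow> ('v, 'm) step_label \<Rightarrow> ('v option, 'm) step_label list" where
  "clone_label w (v, m, lost) =
     (Some v, m, lost) # (if v = w then [(None, m, True)] else [])"

definition clone_labels ::
  "'v \<Rightarrow> ('v, 'm) step_label list \<Rightarrow> ('v option, 'm) step_label list" where
  "clone_labels w ls = concat (map (clone_label w) ls)"

lemma num_broadcasts_clone_labels:
  "num_broadcasts None (clone_labels w ls) = num_broadcasts w ls"
  by (induction ls) (auto simp: clone_labels_def num_broadcasts_def)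

lemma num_successful_broadcasts_clone_labels:
  "num_successful_broadcasts None (clone_labels w ls) = 0"
  by (induction ls) (auto simp: clone_labels_def num_successful_broadcasts_def)

lemma initial_config_clone:
  assumes "initial_config Q I (V, E, L)" and "w \<in> V"
  shows "initial_config Q I (clone_config w (V, E, L))"
proof -
  define V' where "V' = insert None (Some ` V)"
  define E' where "E' = {(x, y). (clone_origin w x, clone_origin w y) \<in> E}"
  have V: "finite V" "L ` V \<subseteq> I" "L ` V \<subseteq> Q"
    and E: "E \<subseteq> V \<times> V" "sym E" "irrefl E"
    using assms(1) by (auto simp: initial_config_def is_config_def)
  have nodes: "x \<in> V' \<longleftrightarrow> clone_origin w x \<in> V" for x
    using assms(2) by (cases x) (auto simp: V'_def clone_origin_def)
  have "finite V'" using V(1) by (simp add: V'_def)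
  moreover have "E' \<subseteq> V' \<times> V'" using E(1) nodes by (auto simp: E'_def)
  moreover have "sym E'" "irrefl E'" using E(2,3) by (auto simp: E'_def sym_def irrefl_def)
  moreover have "clone_origin w ` V' = V"
    using assms(2) by (force simp: V'_def clone_origin_def)
  then have "(L \<circ> clone_origin w) ` V' = L ` V" by (metis image_comp)
  moreover have "clone_config w (V, E, L) = (V', E', L \<circ> clone_origin w)"
    by (simp add: clone_config_def V'_def E'_def)
  ultimately show ?thesis
    using V by (simp add: initial_config_def is_config_def)
qed

lemma lossy_step_clone_other:
  assumes "lossy_step M Delta (V, E, L) (v, m, lost) (V, E, L')" and "v \<noteq> w" and "w \<in> V"
  shows "lossy_step M Delta (clone_config w (V, E, L)) (Some v, m, lost)
           (clone_config w (V, E, L'))"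
  using assms
  by (auto simp: lossy_step_def clone_config_def clone_origin_def split: option.splits if_splits)

text \<open>The clone is not a neighbour of \<open>w\<close> since \<open>E\<close> is irreflexive, so it keeps the
  old state of \<open>w\<close> until its own lost broadcast.\<close>

lemma lossy_step_clone_self:
  assumes step: "lossy_step M Delta (V, E, L) (w, m, lost) (V, E, L')" and "irrefl E"
  shows "lossy_steps M Delta (clone_config w (V, E, L))
           [(Some w, m, lost), (None, m, True)] (clone_config w (V, E, L'))"
proof -
  define E' where "E' = {(x, y). (clone_origin w x, clone_origin w y) \<in> E}"
  define X where "X = (insert None (Some ` V), E', (L' \<circ> clone_origin w)(None := L w))"
  have "(w, w) \<notin> E" using \<open>irrefl E\<close> by (auto simp: irrefl_def)
  then have "lossy_step M Delta (clone_config w (V, E, L)) (Some w, m, lost) X"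
    using step
    by (auto simp: lossy_step_def clone_config_def clone_origin_def X_def E'_def
        split: option.splits if_splits)
  moreover have "lossy_step M Delta X (None, m, True) (clone_config w (V, E, L'))"
    using step
    by (auto simp: lossy_step_def clone_config_def clone_origin_def X_def E'_def
        split: option.splits)
  ultimately show ?thesis by (auto intro: lossy_steps.intros)
qed

lemma lossy_step_clone:
  assumes "lossy_step M Delta (V, E, L) l c'" and "w \<in> V" and "irrefl E"
  shows "lossy_steps M Delta (clone_config w (V, E, L)) (clone_label w l) (clone_config w c')"
proof -
  obtain v m lost where l: "l = (v, m, lost)" by (cases l) auto
  obtain L' where c': "c' = (V, E, L')" using lossy_step_keeps_graph assms(1) by blast
  show ?thesis
  proof (cases "v = w")
    case True
    then show ?thesis using lossy_step_clone_self assms(1,3) l c' by fastforce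
  next
    case False
    then show ?thesis
      using lossy_step_clone_other[of M Delta V E L v m lost L' w] assms(1,2) l c'
      by (auto intro: lossy_steps.intros)
  qed
qed

lemma lossy_steps_clone:
  assumes "lossy_steps M Delta c ls c'" and "w \<in> fst c" and "irrefl (fst (snd c))"
  shows "lossy_steps M Delta (clone_config w c) (clone_labels w ls) (clone_config w c')"
  using assms
proof (induction rule: lossy_steps.induct)
  case (Nil c)
  then show ?case by (auto simp: clone_labels_def intro: lossy_steps.Nil)
next
  case (Cons c l c1 ls c2)
  obtain V E L where c: "c = (V, E, L)" by (cases c) auto
  obtain L1 where "c1 = (V, E, L1)" using lossy_step_keeps_graph Cons.hyps(1) c by blast
  then have "lossy_steps M Delta (clone_config w c1) (clone_labels w ls) (clone_config w c2)"
    using Cons.IH Cons.prems c by auto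
  then show ?case
    using lossy_step_clone[of M Delta V E L l c1 w] Cons.hyps(1) Cons.prems c
    by (auto simp: clone_labels_def intro: lossy_steps_append)
qed

theorem proposition3p6:
  fixes Q I :: "'q set" and M :: "'m set" and Delta :: "('q \<times> 'm action \<times> 'q) set"
    and cs :: "('v, 'q) config list" and ls :: "('v, 'm) step_label list"
    and V :: "'v set" and E :: "('v \<times> 'v) set" and L :: "'v \<Rightarrow> 'q"
    and q :: 'q and vq :: 'v
  assumes "broadcast_protocol Q I M Delta"
    and "lossy_execution Q I M Delta cs ls"
    and "last cs = (V, E, L)"
    and "q \<in> L ` V"
    and "vq \<in> V" and "L vq = q"
  shows "\<exists>(cs' :: ('v option, 'q) config list) (ls' :: ('v option, 'm) step_label list)
           V' E' L' \<iota> vnew.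
           lossy_execution Q I M Delta cs' ls' \<and> last cs' = (V', E', L') \<and>
           card V' = card V + 1 \<and>
           inj_on \<iota> V \<and> \<iota> ` V \<subseteq> V' \<and> (\<forall>v \<in> V. L' (\<iota> v) = L v) \<and>
           vnew \<in> V' - \<iota> ` V \<and> L' vnew = q \<and>
           (\<forall>v \<in> V. ((vnew, \<iota> v) \<in> E' \<longleftrightarrow> (vq, v) \<in> E)) \<and>
           num_broadcasts vnew ls' = num_broadcasts vq ls \<and>
           num_successful_broadcasts vnew ls' = 0"
proof -
  have steps: "lossy_steps M Delta (cs ! 0) ls (V, E, L)"
    and init: "initial_config Q I (cs ! 0)"
    using lossy_execution_imp_lossy_steps[OF assms(2)] assms(2,3)
    by (auto simp: lossy_execution_def)
  then obtain L0 where c0: "cs ! 0 = (V, E, L0)"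
    using lossy_steps_keep_graph by (cases "cs ! 0") fastforce
  with init have "irrefl E" "finite V"
    by (auto simp: initial_config_def is_config_def)
  then have "lossy_steps M Delta (clone_config vq (V, E, L0)) (clone_labels vq ls)
      (clone_config vq (V, E, L))"
    using lossy_steps_clone[of M Delta "cs ! 0" ls "(V, E, L)" vq] steps c0 assms(5) by simp
  moreover have "initial_config Q I (clone_config vq (V, E, L0))"
    using initial_config_clone init c0 assms(5) by metis
  ultimately obtain cs' where "lossy_execution Q I M Delta cs' (clone_labels vq ls)"
      "last cs' = clone_config vq (V, E, L)"
    using lossy_steps_imp_lossy_execution by blast
  then show ?thesis
    using \<open>finite V\<close> assms(5,6)
    by (intro exI[of _ cs'] exI[of _ "clone_labels vq ls"])
       (auto simp: clone_config_def clone_origin_def card_image num_broadcasts_clone_labels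
         num_successful_broadcasts_clone_labels intro!: exI[of _ Some] exI[of _ None])
qed

end
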